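(* Let $b_k>0$ for all $k\ge0$ and suppose that for some $m$, $$\frac{a_0}{b_0}\le\frac{a_1}{b_1}\le\dots\le\frac{a_m}{b_m},\qquad \frac{a_m}{b_m}\ge\frac{a_{m+1}}{b_{m+1}}\ge\frac{a_{m+2}}{b_{m+2}}\ge\cdots,$$ with at least one strict inequality in each chain. Let $$F(x)=\frac{A(x)}{B(x)}=\frac{\sum_{k=0}^\infty a_k(x)_k}{\sum_{k=0}^\infty b_k(x)_k},$$ and assume each series converges uniformly on all compact subsets of $\mathbb{R}$. Then $F(x+1)-F(x)<0$ for all sufficiently large $x$.
   Context: $(x)_k=x(x+1)\cdots(x+k-1)$ is the Pochhammer symbol, $(x)_0=1$. *)

theory Defs
  imports "HOL-Analysis.Analysis"
begin

end

theory Submission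
  imports Defs
begin

(* With p_k = (x)_k and r_k = a_k / b_k, the identity x (x+1)_k = (x + k) (x)_k turns
   x (A(x+1) B(x) - A(x) B(x+1)) into the double series
   sum_{j<k} (k - j) b_j b_k p_j p_k (r_k - r_j).
   As r decreases from its peak at m on, the terms with j >= m are nonpositive, and once r_s < r_m
   every column k >= s contains the strictly negative term j = m. The positive terms have j < m and
   carry the factor p_j <= p_m / x, so for large x they are absorbed by these negative terms: in
   each column k >= s by the term (m, k), and for all columns k < s together by the term (m, s). *)

lemma antimono_from:
  fixes r :: "nat \<Rightarrow> 'a :: order"
  assumes "\<And>k. m \<le> k \<Longrightarrow> r (Suc k) \<le> r k" and "m \<le> j" "j \<le> k"
  shows "r k \<le> r j"
proof (rule lift_Suc_antimono_le_ivl[of "{m..}"])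
  show "r (Suc i) \<le> r i" if "i \<in> {m..}" for i
    using assms(1) that by simp
qed (use assms(2,3) in auto)

lemma le_peak_of_unimodal:
  fixes r :: "nat \<Rightarrow> 'a :: order"
  assumes "\<And>k. k < m \<Longrightarrow> r k \<le> r (Suc k)" and "\<And>k. m \<le> k \<Longrightarrow> r (Suc k) \<le> r k"
  shows "r k \<le> r m"
proof (cases "k \<le> m")
  case True
  show ?thesis
  proof (rule lift_Suc_mono_le_ivl[of "{..<m}"])
    show "r i \<le> r (Suc i)" if "i \<in> {..<m}" for i
      using assms(1) that by simp
  qed (use True in auto)
qed (use antimono_from[of m r, OF assms(2)] in simp)

lemma pochhammer_shift_diff:
  fixes x :: "'a :: comm_ring_1"
  shows "x * pochhammer (x + 1) k - x * pochhammer x k = of_nat k * pochhammer x k"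
  using pochhammer_rec[of x k] pochhammer_rec'[of x k] by (simp add: algebra_simps)

lemma pochhammer_gap:
  fixes x :: real
  assumes "1 \<le> x" "j < k"
  shows "pochhammer x j * x \<le> pochhammer x k"
proof -
  have step: "pochhammer x i * x \<le> pochhammer x (Suc i)" for i
    using pochhammer_pos[of x i] assms(1) by (simp add: pochhammer_Suc)
  have mono: "pochhammer x i \<le> pochhammer x (Suc i)" for i
  proof -
    have "pochhammer x i \<le> pochhammer x i * x"
      using pochhammer_pos[of x i] assms(1) by (simp add: mult_le_cancel_left1)
    then show ?thesis using step order.trans by blast
  qed
  have "pochhammer x j * x \<le> pochhammer x (Suc j)" by (rule step)
  also have "\<dots> \<le> pochhammer x k"
    using lift_Suc_mono_le[of "pochhammer x", OF mono] assms(2) by simp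
  finally show ?thesis .
qed

lemma sums_of_nat_times_pochhammer:
  fixes c :: "nat \<Rightarrow> 'a :: real_normed_field"
  assumes "(\<lambda>k. c k * pochhammer x k) sums C0"
    and "(\<lambda>k. c k * pochhammer (x + 1) k) sums C1"
  shows "(\<lambda>k. of_nat k * c k * pochhammer x k) sums (x * (C1 - C0))"
proof -
  have "(\<lambda>k. x * (c k * pochhammer (x + 1) k - c k * pochhammer x k)) sums (x * (C1 - C0))"
    by (intro sums_mult sums_diff assms)
  moreover have "x * (c k * pochhammer (x + 1) k - c k * pochhammer x k) = of_nat k * c k * pochhammer x k" for k
    using arg_cong[OF pochhammer_shift_diff[of x k], of "\<lambda>y. c k * y"] by (simp add: algebra_simps)
  ultimately show ?thesis by simp
qed

lemma sum_triangle_cross_difference: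
  fixes u v :: "nat \<Rightarrow> 'a :: comm_ring_1"
  shows "(\<Sum>k<n. \<Sum>j<k. (of_nat k - of_nat j) * (u k * v j - u j * v k)) =
    (\<Sum>k<n. of_nat k * u k) * (\<Sum>k<n. v k) - (\<Sum>k<n. u k) * (\<Sum>k<n. of_nat k * v k)"
proof (induction n)
  case 0 show ?case by simp
next
  case (Suc n)
  have "(\<Sum>j<n. (of_nat n - of_nat j) * (u n * v j - u j * v n)) =
     (\<Sum>j<n. of_nat n * u n * v j + of_nat j * u j * v n - u n * (of_nat j * v j) - u j * (of_nat n * v n))"
    by (rule sum.cong) (auto simp: algebra_simps)
  also have "\<dots> = of_nat n * u n * (\<Sum>j<n. v j) + (\<Sum>j<n. of_nat j * u j) * v n
     - u n * (\<Sum>j<n. of_nat j * v j) - (\<Sum>j<n. u j) * (of_nat n * v n)"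
    by (simp only: sum.distrib sum_subtractf sum_distrib_left sum_distrib_right)
  finally have column: "(\<Sum>j<n. (of_nat n - of_nat j) * (u n * v j - u j * v n)) = \<dots>" .
  show ?case
    by (simp only: sum.lessThan_Suc Suc.IH column) (simp add: algebra_simps)
qed

lemma triangle_cross_difference_tendsto:
  fixes a b :: "nat \<Rightarrow> 'a :: real_normed_field"
  assumes "(\<lambda>k. a k * pochhammer x k) sums A0" "(\<lambda>k. a k * pochhammer (x + 1) k) sums A1"
    and "(\<lambda>k. b k * pochhammer x k) sums B0" "(\<lambda>k. b k * pochhammer (x + 1) k) sums B1"
  shows "(\<lambda>n. \<Sum>k<n. \<Sum>j<k. (of_nat k - of_nat j) *
            (a k * pochhammer x k * (b j * pochhammer x j) - a j * pochhammer x j * (b k * pochhammer x k)))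
         \<longlonglongrightarrow> x * (A1 * B0 - A0 * B1)"
proof -
  have lim: "(\<lambda>n. (\<Sum>k<n. of_nat k * a k * pochhammer x k) * (\<Sum>k<n. b k * pochhammer x k)
          - (\<Sum>k<n. a k * pochhammer x k) * (\<Sum>k<n. of_nat k * b k * pochhammer x k))
        \<longlonglongrightarrow> x * (A1 - A0) * B0 - A0 * (x * (B1 - B0))"
    using sums_of_nat_times_pochhammer[OF assms(1,2)] sums_of_nat_times_pochhammer[OF assms(3,4)]
      assms(1,3)
    unfolding sums_def by (intro tendsto_intros)
  have limit_eq: "x * (A1 - A0) * B0 - A0 * (x * (B1 - B0)) = x * (A1 * B0 - A0 * B1)"
    by (simp add: algebra_simps)
  show ?thesis
    using lim unfolding limit_eq
      sum_triangle_cross_difference[of "\<lambda>k. a k * pochhammer x k" "\<lambda>k. b k * pochhammer x k"]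
    by (simp add: mult.assoc)
qed

context
  fixes b p r :: "nat \<Rightarrow> real" and x :: real and m :: nat
  assumes bpos: "\<And>k. b k > 0" and ppos: "\<And>k. p k > 0" and x_ge_1: "1 \<le> x"
    and gap: "\<And>j k. j < k \<Longrightarrow> p j * x \<le> p k"
    and peak: "\<And>k. r k \<le> r m" and desc: "\<And>j k. m \<le> j \<Longrightarrow> j \<le> k \<Longrightarrow> r k \<le> r j"
begin

lemma triangle_term_bound:
  assumes "j < k"
  shows "(real k - real j) * b j * b k * p j * p k * (r k - r j)
    \<le> (if j < m then real k * b k * p k * (p m / x) * (b j * (r m - r j)) else 0)
       + (if j = m then (real k - real m) * b m * b k * p m * p k * (r k - r m) else 0)"
proof -
  define w where "w = (real k - real j) * b j * b k * p j * p k"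
  have "x > 0" using x_ge_1 by simp
  have "0 \<le> w" using assms bpos[of j] bpos[of k] ppos[of j] ppos[of k] by (simp add: w_def)
  consider "j < m" | "j = m" | "m < j" by linarith
  then show ?thesis
  proof cases
    case 1
    have "(real k - real j) * p j \<le> real k * (p m / x)"
      using gap[OF 1] ppos[of j] \<open>x > 0\<close> by (intro mult_mono) (auto simp: pos_le_divide_eq)
    then have "(real k - real j) * p j * (b j * b k * p k) \<le> real k * (p m / x) * (b j * b k * p k)"
      using bpos[of j] bpos[of k] ppos[of k] by (intro mult_right_mono) auto
    then have w_le: "w \<le> real k * (p m / x) * (b j * b k * p k)"
      by (simp add: w_def ac_simps)
    have "w * (r k - r j) \<le> w * (r m - r j)"
      using \<open>0 \<le> w\<close> peak[of k] by (intro mult_left_mono) auto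
    also have "\<dots> \<le> real k * (p m / x) * (b j * b k * p k) * (r m - r j)"
      using w_le peak[of j] by (intro mult_right_mono) auto
    finally show ?thesis using 1 by (simp add: w_def ac_simps)
  next
    case 2
    then show ?thesis by simp
  next
    case 3
    have "w * (r k - r j) \<le> 0"
      using \<open>0 \<le> w\<close> assms desc[of j k] 3 by (intro mult_nonneg_nonpos) auto
    then show ?thesis using 3 by (simp add: w_def)
  qed
qed

lemma triangle_column_bound:
  "(\<Sum>j<k. (real k - real j) * b j * b k * p j * p k * (r k - r j))
    \<le> real k * b k * p k * (p m / x) * (\<Sum>j<m. b j * (r m - r j))
       + (if m < k then (real k - real m) * b m * b k * p m * p k * (r k - r m) else 0)"
proof -
  define g where "g j = real k * b k * p k * (p m / x) * (b j * (r m - r j))" for j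
  define h where "h = (real k - real m) * b m * b k * p m * p k * (r k - r m)"
  have g_nonneg: "0 \<le> g j" for j
    unfolding g_def using bpos[of j] bpos[of k] ppos[of k] ppos[of m] peak[of j] x_ge_1
    by (intro mult_nonneg_nonneg divide_nonneg_pos) auto
  have "(\<Sum>j<k. (real k - real j) * b j * b k * p j * p k * (r k - r j))
      \<le> (\<Sum>j<k. if j < m then g j else 0) + (\<Sum>j<k. if j = m then h else 0)"
    unfolding sum.distrib[symmetric] g_def h_def by (intro sum_mono triangle_term_bound) simp
  moreover have "(\<Sum>j<k. if j < m then g j else 0) = (\<Sum>j\<in>{..<k} \<inter> {..<m}. g j)"
    using sum.inter_restrict[of "{..<k}" g "{..<m}"] by simp
  moreover have "\<dots> \<le> (\<Sum>j<m. g j)"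
    using g_nonneg by (intro sum_mono2) auto
  moreover have "(\<Sum>j<m. g j) = real k * b k * p k * (p m / x) * (\<Sum>j<m. b j * (r m - r j))"
    by (simp add: g_def sum_distrib_left)
  moreover have "(\<Sum>j<k. if j = m then h else 0) = (if m < k then h else 0)"
    by simp
  ultimately show ?thesis
    unfolding h_def by linarith
qed

lemma peak_deficit_sum_nonneg: "0 \<le> (\<Sum>j<m. b j * (r m - r j))"
  using bpos peak by (intro sum_nonneg mult_nonneg_nonneg) (auto intro: less_imp_le)

lemma triangle_column_bound_before:
  assumes "k < s"
  shows "(\<Sum>j<k. (real k - real j) * b j * b k * p j * p k * (r k - r j))
    \<le> real k * b k * (p s * (p m / x) * (\<Sum>j<m. b j * (r m - r j)))"
proof -
  define C where "C = (\<Sum>j<m. b j * (r m - r j))"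
  have "(real k - real m) * b m * b k * p m * p k * (r k - r m) \<le> 0" if "m < k"
    using that peak[of k] bpos[of m] bpos[of k] ppos[of m] ppos[of k]
    by (intro mult_nonneg_nonpos) auto
  moreover have "p k \<le> p k * x"
    using ppos[of k] x_ge_1 by (simp add: mult_le_cancel_left1)
  then have "p k \<le> p s"
    using gap[OF assms] by linarith
  then have "p k * (p m / x * C) \<le> p s * (p m / x * C)"
    using ppos[of m] peak_deficit_sum_nonneg x_ge_1 by (intro mult_right_mono) (auto simp: C_def)
  then have "real k * b k * (p k * (p m / x * C)) \<le> real k * b k * (p s * (p m / x * C))"
    using bpos[of k] by (intro mult_left_mono) auto
  ultimately show ?thesis
    using triangle_column_bound[of k] by (auto simp: C_def mult.assoc split: if_splits)
qed

lemma triangle_column_bound_beyond: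
  assumes "m < k" and drop: "r k \<le> r m - \<delta>"
    and large: "(real m + 1) * (\<Sum>j<m. b j * (r m - r j)) / x \<le> b m * \<delta> / 2"
  shows "(\<Sum>j<k. (real k - real j) * b j * b k * p j * p k * (r k - r j))
    \<le> - ((real k - real m) * b k * p k * p m * (b m * \<delta> / 2))"
proof -
  define C where "C = (\<Sum>j<m. b j * (r m - r j))"
  define Q where "Q = (real k - real m) * b k * p k * p m"
  have "0 \<le> Q" unfolding Q_def using \<open>m < k\<close> bpos[of k] ppos[of k] ppos[of m] by simp
  have "real m * 1 \<le> real m * (real k - real m)"
    using \<open>m < k\<close> by (intro mult_left_mono) auto
  then have k_le: "real k \<le> (real m + 1) * (real k - real m)" by (simp add: algebra_simps)
  have "real k * (b k * p k * (p m / x) * C) \<le> (real m + 1) * (real k - real m) * (b k * p k * (p m / x) * C)"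
    using bpos[of k] ppos[of k] ppos[of m] peak_deficit_sum_nonneg x_ge_1
    by (intro mult_right_mono[OF k_le]) (auto simp: C_def)
  also have "\<dots> = Q * ((real m + 1) * C / x)" by (simp add: Q_def)
  also have "\<dots> \<le> Q * (b m * \<delta> / 2)"
    using \<open>0 \<le> Q\<close> large by (intro mult_left_mono) (simp_all add: C_def)
  finally have positive_part: "real k * b k * p k * (p m / x) * C \<le> Q * (b m * \<delta> / 2)"
    by (simp only: mult.assoc)
  have "(real k - real m) * b m * b k * p m * p k * (r k - r m) = Q * b m * (r k - r m)"
    by (simp add: Q_def)
  also have "\<dots> \<le> Q * b m * (- \<delta>)"
    using \<open>0 \<le> Q\<close> bpos[of m] drop by (intro mult_left_mono) auto
  finally have negative_part:
    "(real k - real m) * b m * b k * p m * p k * (r k - r m) \<le> Q * b m * (- \<delta>)" .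
  have "Q * b m * (- \<delta>) = - 2 * (Q * (b m * \<delta> / 2))" by simp
  then show ?thesis
    using triangle_column_bound[of k, unfolded if_P[OF \<open>m < k\<close>]] positive_part negative_part
    unfolding C_def Q_def by linarith
qed

lemma triangle_sum_bound:
  assumes "m < s" and drop: "\<And>k. s \<le> k \<Longrightarrow> r k \<le> r m - \<delta>"
    and large: "(real m + 1) * (\<Sum>j<m. b j * (r m - r j)) / x \<le> b m * \<delta> / 2"
    and "s < n"
  shows "(\<Sum>k<n. \<Sum>j<k. (real k - real j) * b j * b k * p j * p k * (r k - r j))
    \<le> p m * p s * ((\<Sum>j<m. b j * (r m - r j)) * (\<Sum>k<s. real k * b k) / x - b m * b s * \<delta> / 2)"
proof -
  define C where "C = (\<Sum>j<m. b j * (r m - r j))"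
  define V where "V k = (\<Sum>j<k. (real k - real j) * b j * b k * p j * p k * (r k - r j))" for k
  have "0 \<le> (real m + 1) * C / x" using peak_deficit_sum_nonneg x_ge_1 by (simp add: C_def)
  then have "0 \<le> b m * \<delta> / 2" using large unfolding C_def by linarith
  then have "0 \<le> \<delta>" using bpos[of m] by (simp add: zero_le_mult_iff)
  have V_beyond: "V k \<le> - ((real k - real m) * b k * p k * p m * (b m * \<delta> / 2))" if "s \<le> k" for k
    unfolding V_def using \<open>m < s\<close> that drop[OF that] large by (intro triangle_column_bound_beyond) auto
  have "(\<Sum>k<s. V k) \<le> (\<Sum>k<s. real k * b k * (p s * (p m / x) * C))"
    unfolding V_def C_def by (intro sum_mono triangle_column_bound_before) simp
  also have "\<dots> = (\<Sum>k<s. real k * b k) * (p s * (p m / x) * C)"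
    by (rule sum_distrib_right[symmetric])
  also have "\<dots> = p m * p s * (C * (\<Sum>k<s. real k * b k) / x)"
    by simp
  finally have head: "(\<Sum>k<s. V k) \<le> p m * p s * (C * (\<Sum>k<s. real k * b k) / x)" .
  have "0 \<le> b s * p s * p m * (b m * \<delta> / 2)"
    using bpos[of s] bpos[of m] ppos[of s] ppos[of m] \<open>0 \<le> \<delta>\<close> by simp
  then have "1 * (b s * p s * p m * (b m * \<delta> / 2))
      \<le> (real s - real m) * (b s * p s * p m * (b m * \<delta> / 2))"
    using \<open>m < s\<close> by (intro mult_right_mono) auto
  then have diagonal: "V s \<le> - (p m * p s * (b m * b s * \<delta> / 2))"
    using V_beyond[of s] by (simp add: algebra_simps)
  have tail: "(\<Sum>k\<in>{Suc s..<n}. V k) \<le> 0"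
  proof (rule sum_nonpos)
    fix k assume "k \<in> {Suc s..<n}"
    then have "s \<le> k" by simp
    have "0 \<le> (real k - real m) * b k * p k * p m * (b m * \<delta> / 2)"
      using \<open>m < s\<close> \<open>s \<le> k\<close> bpos[of k] bpos[of m] ppos[of k] ppos[of m] \<open>0 \<le> \<delta>\<close> by simp
    then show "V k \<le> 0" using V_beyond[OF \<open>s \<le> k\<close>] by linarith
  qed
  have "(\<Sum>k<n. V k) = (\<Sum>k<s. V k) + V s + (\<Sum>k\<in>{Suc s..<n}. V k)"
    using \<open>s < n\<close>
    by (metis Suc_leI atLeast0LessThan sum.atLeastLessThan_concat zero_le sum.lessThan_Suc)
  then show ?thesis
    using head diagonal tail by (simp add: V_def C_def algebra_simps)
qed

end

lemma eventually_const_divide_less_at_top: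
  fixes c d :: real
  assumes "0 < d"
  shows "\<forall>\<^sub>F x in at_top. c / x < d"
  using order_tendstoD(2)[OF tendsto_divide_0[OF tendsto_const
      filterlim_at_top_imp_at_infinity[OF filterlim_ident]] assms] .

lemma shifted_quotient_diff_neg:
  fixes a b r :: "nat \<Rightarrow> real" and x \<delta> A0 A1 B0 B1 :: real
  assumes bpos: "\<And>k. b k > 0" and a_eq: "\<And>k. a k = r k * b k" and "1 \<le> x"
    and A0: "(\<lambda>k. a k * pochhammer x k) sums A0" and A1: "(\<lambda>k. a k * pochhammer (x + 1) k) sums A1"
    and B0: "(\<lambda>k. b k * pochhammer x k) sums B0" and B1: "(\<lambda>k. b k * pochhammer (x + 1) k) sums B1"
    and peak: "\<And>k. r k \<le> r m" and desc: "\<And>j k. m \<le> j \<Longrightarrow> j \<le> k \<Longrightarrow> r k \<le> r j"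
    and "m < s" and drop: "\<And>k. s \<le> k \<Longrightarrow> r k \<le> r m - \<delta>"
    and large: "(real m + 1) * (\<Sum>j<m. b j * (r m - r j)) / x \<le> b m * \<delta> / 2"
    and larger: "(\<Sum>j<m. b j * (r m - r j)) * (\<Sum>k<s. real k * b k) / x < b m * b s * \<delta> / 2"
  shows "A1 / B1 - A0 / B0 < 0"
proof -
  define p where "p = pochhammer x"
  have "x > 0" using \<open>1 \<le> x\<close> by simp
  have ppos: "p k > 0" for k using pochhammer_pos[OF \<open>x > 0\<close>] by (simp add: p_def)
  have gap: "p j * x \<le> p k" if "j < k" for j k
    using pochhammer_gap[OF \<open>1 \<le> x\<close> that] by (simp add: p_def)
  have "0 < B0" using B0 bpos ppos by (auto simp: sums_iff p_def intro!: suminf_pos)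
  have "0 < B1" using B1 bpos pochhammer_pos[of "x + 1"] \<open>x > 0\<close>
    by (auto simp: sums_iff intro!: suminf_pos)
  define T where "T = (\<lambda>n. \<Sum>k<n. \<Sum>j<k. (real k - real j) * b j * b k * p j * p k * (r k - r j))"
  have "T \<longlonglongrightarrow> x * (A1 * B0 - A0 * B1)"
    using triangle_cross_difference_tendsto[OF A0 A1 B0 B1]
    by (simp add: T_def p_def a_eq algebra_simps)
  moreover have "T n \<le> p m * p s * ((\<Sum>j<m. b j * (r m - r j)) * (\<Sum>k<s. real k * b k) / x - b m * b s * \<delta> / 2)"
    if "s < n" for n
    unfolding T_def by (rule triangle_sum_bound[OF bpos ppos \<open>1 \<le> x\<close> gap peak desc \<open>m < s\<close> drop large that])
  ultimately have "x * (A1 * B0 - A0 * B1) \<le> p m * p s * ((\<Sum>j<m. b j * (r m - r j)) * (\<Sum>k<s. real k * b k) / x - b m * b s * \<delta> / 2)"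
    by (intro LIMSEQ_le_const2[of T]) (auto intro: Suc_le_lessD)
  also have "\<dots> < 0"
    using larger ppos[of m] ppos[of s] by (simp add: mult_pos_neg)
  finally have "A1 * B0 - A0 * B1 < 0"
    using \<open>x > 0\<close> by (simp add: mult_less_0_iff)
  then show ?thesis
    using \<open>0 < B0\<close> \<open>0 < B1\<close> by (simp add: field_simps)
qed

theorem lemma5:
  fixes a b :: "nat \<Rightarrow> real" and m :: nat
  assumes bpos: "\<And>k. b k > 0"
    and up: "\<And>k. k < m \<Longrightarrow> a k / b k \<le> a (Suc k) / b (Suc k)"
    and up_strict: "\<exists>k<m. a k / b k < a (Suc k) / b (Suc k)"
    and down: "\<And>k. m \<le> k \<Longrightarrow> a (Suc k) / b (Suc k) \<le> a k / b k"
    and down_strict: "\<exists>k\<ge>m. a (Suc k) / b (Suc k) < a k / b k"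
    and unifA: "\<And>K. compact K \<Longrightarrow>
        uniform_limit K (\<lambda>n x. \<Sum>k<n. a k * pochhammer x k)
                        (\<lambda>x. \<Sum>k. a k * pochhammer x k) sequentially"
    and unifB: "\<And>K. compact K \<Longrightarrow>
        uniform_limit K (\<lambda>n x. \<Sum>k<n. b k * pochhammer x k)
                        (\<lambda>x. \<Sum>k. b k * pochhammer x k) sequentially"
  defines "F \<equiv> (\<lambda>x::real. (\<Sum>k. a k * pochhammer x k) / (\<Sum>k. b k * pochhammer x k))"
  shows "\<forall>\<^sub>F x in at_top. F (x + 1) - F x < 0"
proof -
  define r where "r k = a k / b k" for k
  have a_eq: "a k = r k * b k" for k
    using bpos[of k] by (simp add: r_def)
  have desc: "r k \<le> r j" if "m \<le> j" "j \<le> k" for j k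
    by (rule antimono_from[of m r]) (use down that in \<open>simp_all add: r_def\<close>)
  have peak: "r k \<le> r m" for k
    by (rule le_peak_of_unimodal[of m r]) (use up down in \<open>simp_all add: r_def\<close>)
  obtain k0 where "m \<le> k0" "r (Suc k0) < r k0"
    using down_strict by (auto simp: r_def)
  then obtain s where "m < s" "r s < r m"
    using peak[of k0] by (meson le_imp_less_Suc order_less_le_trans)
  define \<delta> where "\<delta> = r m - r s"
  have "0 < \<delta>" using \<open>r s < r m\<close> by (simp add: \<delta>_def)
  have drop: "r k \<le> r m - \<delta>" if "s \<le> k" for k
    using desc[of s k] \<open>m < s\<close> that by (simp add: \<delta>_def)
  have sumsA: "(\<lambda>k. a k * pochhammer y k) sums (\<Sum>k. a k * pochhammer y k)" for y
    using tendsto_uniform_limitI[OF unifA[of "{y}"]] by (simp add: sums_def)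
  have sumsB: "(\<lambda>k. b k * pochhammer y k) sums (\<Sum>k. b k * pochhammer y k)" for y
    using tendsto_uniform_limitI[OF unifB[of "{y}"]] by (simp add: sums_def)
  have "\<forall>\<^sub>F x in at_top. 1 \<le> x
      \<and> (real m + 1) * (\<Sum>j<m. b j * (r m - r j)) / x < b m * \<delta> / 2
      \<and> (\<Sum>j<m. b j * (r m - r j)) * (\<Sum>k<s. real k * b k) / x < b m * b s * \<delta> / 2"
    using bpos[of m] bpos[of s] \<open>0 < \<delta>\<close>
    by (intro eventually_conj eventually_ge_at_top eventually_const_divide_less_at_top) simp_all
  then show ?thesis
  proof eventually_elim
    case (elim x)
    then show ?case
      unfolding F_def
      by (intro shifted_quotient_diff_neg[OF bpos a_eq _ sumsA sumsA sumsB sumsB peak desc \<open>m < s\<close> drop])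
        auto
  qed
qed

end
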